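(* Let $S$ be a semigroup, $I, J$ sets and $P$ a $J\times I$ matrix, and let $M$ be either $M(S; I, J; P)$ (entries of $P$ in $S$) or $M^0(S; I, J; P)$ (entries of $P$ in $S \cup \{0\}$), and suppose $M$ is finitely generated. Choose $i \in I$ and $j \in J$ with $P_{ji} \neq 0$ and let $T = \{(i, s, j) : s \in S\} \subseteq M$. If for every $j' \in J$ we have either $P_{j'i} = 0$ or $S P_{j'i} \subseteq S P_{ji}$, then $T$ is a pseudo-right-unitary subsemigroup of $M$.
   Context: The Rees matrix semigroup with zero $M^0(S; I, J; P)$ (where $0 \notin S$) has elements $(I \times S \times J) \cup \{0\}$, $0$ is a zero, and $(i_1, g_1, j_1)(i_2, g_2, j_2) = (i_1, g_1 P_{j_1 i_2} g_2, j_2)$ if $P_{j_1 i_2} \in S$ and $=0$ if $P_{j_1 i_2} = 0$. If $P$ has no zero entries, $M(S;I,J;P)$ is the subsemigroup $I \times S \times J$. A subsemigroup $T$ of a semigroup $M$ is pseudo-right-unitary if for every $a \in M$ there exists $b \in T$ such that $ax = bx$ for every $x \in T$ with $ax \in T$. *)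

theory Defs
  imports Main
begin

text \<open>The zero is encoded as None, the triple (i,s,j) as Some (i,s,j).
  The sandwich matrix P is indexed P j i, with None standing for the entry 0.\<close>

fun rees_mult :: "('j \<Rightarrow> 'i \<Rightarrow> 'a::semigroup_mult option) \<Rightarrow>
    ('i \<times> 'a \<times> 'j) option \<Rightarrow> ('i \<times> 'a \<times> 'j) option \<Rightarrow> ('i \<times> 'a \<times> 'j) option" where
  "rees_mult P (Some (i1, g1, j1)) (Some (i2, g2, j2)) =
     (case P j1 i2 of None \<Rightarrow> None | Some p \<Rightarrow> Some (i1, g1 * p * g2, j2))"
| "rees_mult P _ _ = None"

definition rees0_carrier :: "'i set \<Rightarrow> 'j set \<Rightarrow> ('i \<times> 'a \<times> 'j) option set" where
  "rees0_carrier I J = insert None (Some ` (I \<times> UNIV \<times> J))"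

text \<open>Carrier of M(S; I, J; P) (only meaningful when P has no zero entries).\<close>
definition rees_carrier :: "'i set \<Rightarrow> 'j set \<Rightarrow> ('i \<times> 'a \<times> 'j) option set" where
  "rees_carrier I J = Some ` (I \<times> UNIV \<times> J)"

inductive_set generated :: "('b \<Rightarrow> 'b \<Rightarrow> 'b) \<Rightarrow> 'b set \<Rightarrow> 'b set"
  for mult :: "'b \<Rightarrow> 'b \<Rightarrow> 'b" and A :: "'b set" where
  gen_base: "a \<in> A \<Longrightarrow> a \<in> generated mult A"
| gen_mult: "x \<in> generated mult A \<Longrightarrow> y \<in> generated mult A \<Longrightarrow> mult x y \<in> generated mult A"

definition finitely_generated :: "('b \<Rightarrow> 'b \<Rightarrow> 'b) \<Rightarrow> 'b set \<Rightarrow> bool" where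
  "finitely_generated mult M \<longleftrightarrow> (\<exists>A. finite A \<and> A \<subseteq> M \<and> generated mult A = M)"

definition subsemigroup :: "('b \<Rightarrow> 'b \<Rightarrow> 'b) \<Rightarrow> 'b set \<Rightarrow> 'b set \<Rightarrow> bool" where
  "subsemigroup mult T M \<longleftrightarrow> T \<subseteq> M \<and> (\<forall>x\<in>T. \<forall>y\<in>T. mult x y \<in> T)"

definition pseudo_right_unitary :: "('b \<Rightarrow> 'b \<Rightarrow> 'b) \<Rightarrow> 'b set \<Rightarrow> 'b set \<Rightarrow> bool" where
  "pseudo_right_unitary mult T M \<longleftrightarrow> subsemigroup mult T M \<and>
     (\<forall>a\<in>M. \<exists>b\<in>T. \<forall>x\<in>T. mult a x \<in> T \<longrightarrow> mult a x = mult b x)"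

end

theory Submission
  imports Defs
begin

text \<open>If a product a x with x = (i,t,j) lands in T = {(i,s,j)}, then a = (i,g,k) with
  P k i = q \<noteq> 0, and a x = (i, g q t, j). The hypothesis S q \<subseteq> S (P j i) gives
  g q = h (P j i) for some h, and then b = (i,h,j) \<in> T satisfies b x = a x for every x \<in> T;
  if no product a x lies in T, any b \<in> T will do.\<close>

lemma rees_mult_eq_SomeE:
  assumes "rees_mult P a (Some (i, t, j)) = Some (i', s, j')"
  obtains g k q where "a = Some (i', g, k)" "P k i = Some q" "s = g * q * t" "j' = j"
proof -
  obtain i'' g k where a: "a = Some (i'', g, k)"
    using assms by (cases a) auto
  then obtain q where "P k i = Some q"
    using assms by (cases "P k i") auto
  with a assms show ?thesis
    using that by auto
qed

lemma rees_mult_left_factor_cong: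
  assumes "P k i = Some q" and "P j i = Some p" and "g * q = h * p"
  shows "rees_mult P (Some (i', g, k)) (Some (i, t, l)) = rees_mult P (Some (i', h, j)) (Some (i, t, l))"
  using assms by simp

lemma rees_block_subsemigroup:
  assumes "P j i \<noteq> None" and "{Some (i, s, j) | s. True} \<subseteq> M"
  shows "subsemigroup (rees_mult P) {Some (i, s, j) | s. True} M"
  using assms by (auto simp: subsemigroup_def)

lemma rees_block_pseudo_right_unitary:
  assumes T_sub: "{Some (i, s, j) | s. True} \<subseteq> M"
    and M_sub: "M \<subseteq> insert None (Some ` (UNIV \<times> UNIV \<times> J))"
    and p: "P j i = Some p"
    and divides: "\<forall>k\<in>J. \<forall>q. P k i = Some q \<longrightarrow> {s * q | s. True} \<subseteq> {s * p | s. True}"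
  shows "pseudo_right_unitary (rees_mult P) {Some (i, s, j) | s. True} M"
    (is "pseudo_right_unitary _ ?T M")
proof -
  have "\<exists>b\<in>?T. \<forall>x\<in>?T. rees_mult P a x \<in> ?T \<longrightarrow> rees_mult P a x = rees_mult P b x"
    if "a \<in> M" for a
  proof (cases "\<exists>x\<in>?T. rees_mult P a x \<in> ?T")
    case True
    then obtain t s where "rees_mult P a (Some (i, t, j)) = Some (i, s, j)"
      by auto
    then obtain g k q where a: "a = Some (i, g, k)" and q: "P k i = Some q"
      by (rule rees_mult_eq_SomeE)
    have "k \<in> J"
      using \<open>a \<in> M\<close> M_sub a by auto
    with divides q have "{s * q | s. True} \<subseteq> {s * p | s. True}"
      by blast
    then have "g * q \<in> {s * p | s. True}"
      by blast
    then obtain h where h: "g * q = h * p"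
      by auto
    have "rees_mult P a x = rees_mult P (Some (i, h, j)) x" if "x \<in> ?T" for x
      using that a rees_mult_left_factor_cong[where P = P, OF q p h] by auto
    then show ?thesis
      by auto
  next
    case False
    then show ?thesis
      by auto
  qed
  moreover have "subsemigroup (rees_mult P) ?T M"
    using p T_sub by (intro rees_block_subsemigroup) simp_all
  ultimately show ?thesis
    unfolding pseudo_right_unitary_def by blast
qed

theorem proposition5p1:
  fixes P :: "'j \<Rightarrow> 'i \<Rightarrow> 'a::semigroup_mult option"
    and I :: "'i set" and J :: "'j set"
    and M :: "('i \<times> 'a \<times> 'j) option set"
    and i :: 'i and j :: 'j
  assumes M_def: "M = rees0_carrier I J \<or>
                  (M = rees_carrier I J \<and> (\<forall>j'\<in>J. \<forall>i'\<in>I. P j' i' \<noteq> None))"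
    and fg: "finitely_generated (rees_mult P) M"
    and i: "i \<in> I" and j: "j \<in> J"
    and Pji: "P j i \<noteq> None"
    and cond: "\<forall>j'\<in>J. P j' i = None \<or>
                 {s * the (P j' i) | s. True} \<subseteq> {s * the (P j i) | s. True}"
  shows "pseudo_right_unitary (rees_mult P) {Some (i, s, j) | s. True} M"
proof -
  obtain p where p: "P j i = Some p"
    using Pji by blast
  have "{Some (i, s, j) | s. True} \<subseteq> M"
    using M_def i j by (auto simp: rees0_carrier_def rees_carrier_def)
  moreover have "M \<subseteq> insert None (Some ` (UNIV \<times> UNIV \<times> J))"
    using M_def by (auto simp: rees0_carrier_def rees_carrier_def)
  moreover note p
  moreover have "\<forall>k\<in>J. \<forall>q. P k i = Some q \<longrightarrow> {s * q | s. True} \<subseteq> {s * p | s. True}"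
    using cond p by fastforce
  ultimately show ?thesis
    by (rule rees_block_pseudo_right_unitary)
qed

end
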